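(* If $P$ is a rooted star poset with $n$ elements, then the degree of noninvertibility of promotion $\partial:\Lambda(P)\to\Lambda(P)$ equals $n$.
   Context: $\Lambda(P)$ is the set of labelings (bijections $P\to[n]$) of $P$. Promotion $\partial$: for non-maximal $x$, the $L$-successor of $x$ is the element greater than $x$ with minimal label; the promotion chain is $v_1=L^{-1}(1)$, $v_{i+1}$ the $L$-successor of $v_i$, ending at the first maximal $v_m$; $\partial(L)(x)=L(x)-1$ off the chain, $\partial(L)(v_i)=L(v_{i+1})-1$ for $i<m$, $\partial(L)(v_m)=n$. A rooted star poset is a poset with a unique maximal element (the root) that covers every other element, and no other relations. The degree of noninvertibility of $f:X\to X$ ($X$ finite) is $\deg(f)=\frac{1}{|X|}\sum_{x\in X}|f^{-1}(x)|^2$. *)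

theory Defs
  imports Complex_Main
begin

text \<open>A finite poset is given by a finite carrier set P and a strict order relation lt
  (only its restriction to P matters). Labelings are bijections P -> {1..n} (n = card P),
  taken to be 0 outside P so that they are canonical representatives.\<close>

definition labelings :: "'a set \<Rightarrow> ('a \<Rightarrow> nat) set" where
  "labelings P = {L. bij_betw L P {1..card P} \<and> (\<forall>x. x \<notin> P \<longrightarrow> L x = 0)}"

definition is_maximal :: "'a set \<Rightarrow> ('a \<Rightarrow> 'a \<Rightarrow> bool) \<Rightarrow> 'a \<Rightarrow> bool" where
  "is_maximal P lt x \<longleftrightarrow> x \<in> P \<and> \<not> (\<exists>y\<in>P. lt x y)"

definition L_succ :: "'a set \<Rightarrow> ('a \<Rightarrow> 'a \<Rightarrow> bool) \<Rightarrow> ('a \<Rightarrow> nat) \<Rightarrow> 'a \<Rightarrow> 'a" where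
  "L_succ P lt L x = (ARG_MIN L y. y \<in> P \<and> lt x y)"

definition chain_start :: "'a set \<Rightarrow> ('a \<Rightarrow> nat) \<Rightarrow> 'a" where
  "chain_start P L = (THE x. x \<in> P \<and> L x = 1)"

definition chain_elt :: "'a set \<Rightarrow> ('a \<Rightarrow> 'a \<Rightarrow> bool) \<Rightarrow> ('a \<Rightarrow> nat) \<Rightarrow> nat \<Rightarrow> 'a" where
  "chain_elt P lt L i = (L_succ P lt L ^^ i) (chain_start P L)"

definition in_chain :: "'a set \<Rightarrow> ('a \<Rightarrow> 'a \<Rightarrow> bool) \<Rightarrow> ('a \<Rightarrow> nat) \<Rightarrow> 'a \<Rightarrow> bool" where
  "in_chain P lt L x \<longleftrightarrow>
     (\<exists>i. chain_elt P lt L i = x \<and> (\<forall>j<i. \<not> is_maximal P lt (chain_elt P lt L j)))"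

definition promotion :: "'a set \<Rightarrow> ('a \<Rightarrow> 'a \<Rightarrow> bool) \<Rightarrow> ('a \<Rightarrow> nat) \<Rightarrow> ('a \<Rightarrow> nat)" where
  "promotion P lt L = (\<lambda>x.
     if x \<notin> P then 0
     else if in_chain P lt L x then
       (if is_maximal P lt x then card P else L (L_succ P lt L x) - 1)
     else L x - 1)"

definition rooted_star :: "'a set \<Rightarrow> ('a \<Rightarrow> 'a \<Rightarrow> bool) \<Rightarrow> 'a \<Rightarrow> bool" where
  "rooted_star P lt r \<longleftrightarrow> finite P \<and> r \<in> P \<and>
     (\<forall>x\<in>P. \<forall>y\<in>P. lt x y \<longleftrightarrow> (y = r \<and> x \<noteq> r))"

definition deg_noninv :: "('b \<Rightarrow> 'b) \<Rightarrow> 'b set \<Rightarrow> real" where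
  "deg_noninv f X = (1 / real (card X)) * (\<Sum>x\<in>X. real (card {y\<in>X. f y = x}) ^ 2)"

end

theory Submission
  imports Defs
begin

text \<open>In a rooted star with root \<open>r\<close> the promotion chain of \<open>L\<close> is \<open>L\<inverse>(1)\<close> followed by \<open>r\<close>,
  so \<open>\<partial>L\<close> is \<open>L\<close> composed with a cyclic relabelling of \<open>{1..n}\<close> that depends only on
  \<open>L(r)\<close>, and always \<open>\<partial>L(r) = n\<close>. Undoing that relabelling for each of the \<open>n\<close> possible
  values of \<open>L(r)\<close> shows that every labeling in the image of \<open>\<partial>\<close> has exactly \<open>n\<close> preimages;
  a map all of whose nonempty fibres have size \<open>n\<close> has degree of noninvertibility \<open>n\<close>.\<close>

lemma deg_noninv_uniform_fibres:
  assumes fin: "finite X" and ne: "X \<noteq> {}" and maps: "f ` X \<subseteq> X"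
    and fibre: "\<And>x. x \<in> f ` X \<Longrightarrow> card {y \<in> X. f y = x} = n"
  shows "deg_noninv f X = real n"
proof -
  let ?fib = "\<lambda>x. card {y \<in> X. f y = x}"
  have empty_fibre: "?fib x = 0" if "x \<notin> f ` X" for x
    using that by (metis (mono_tags, lifting) card.empty empty_Collect_eq imageI)
  have restrict: "(\<Sum>x\<in>X. g (?fib x)) = (\<Sum>x\<in>f ` X. g (?fib x))"
    if "g 0 = 0" for g :: "nat \<Rightarrow> 'b::comm_monoid_add"
    by (rule sum.mono_neutral_right) (simp_all add: fin maps that empty_fibre)
  have "card X = (\<Sum>x\<in>X. ?fib x)"
    using sum.group[OF fin fin maps, of "\<lambda>_. 1::nat"] by simp
  also have "\<dots> = card (f ` X) * n"
    using restrict[of id] fibre by simp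
  finally have card_X: "card X = card (f ` X) * n" .
  have "(\<Sum>x\<in>X. real (?fib x) ^ 2) = real (card (f ` X)) * real n ^ 2"
    using restrict[of "\<lambda>m. real m ^ 2"] fibre by simp
  moreover have "card (f ` X) > 0" "n > 0"
    using card_X fin ne by (auto simp: card_gt_0_iff)
  ultimately show ?thesis
    unfolding deg_noninv_def card_X by (simp add: power2_eq_square)
qed

lemma labelings_inj_on: "L \<in> labelings P \<Longrightarrow> inj_on L P"
  unfolding labelings_def bij_betw_def by auto

lemma labelings_range: "L \<in> labelings P \<Longrightarrow> x \<in> P \<Longrightarrow> L x \<in> {1..card P}"
  unfolding labelings_def bij_betw_def by auto

lemma labelings_outside: "L \<in> labelings P \<Longrightarrow> x \<notin> P \<Longrightarrow> L x = 0"
  unfolding labelings_def by auto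

lemma labelings_finite:
  assumes "finite P"
  shows "finite (labelings P)"
proof (rule finite_subset)
  show "labelings P \<subseteq> {L. \<forall>x. (x \<in> P \<longrightarrow> L x \<in> {1..card P}) \<and> (x \<notin> P \<longrightarrow> L x = 0)}"
  proof
    fix L assume L: "L \<in> labelings P"
    show "L \<in> {L. \<forall>x. (x \<in> P \<longrightarrow> L x \<in> {1..card P}) \<and> (x \<notin> P \<longrightarrow> L x = 0)}"
      using labelings_range[OF L] labelings_outside[OF L] by simp
  qed
  show "finite {L. \<forall>x. (x \<in> P \<longrightarrow> L x \<in> {1..card P}) \<and> (x \<notin> P \<longrightarrow> L x = (0::nat))}"
    by (rule finite_set_of_finite_funs) (simp_all add: assms)
qed

lemma labelings_nonempty:
  assumes "finite P"
  shows "labelings P \<noteq> {}"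
proof -
  obtain h where h: "bij_betw h P {1..card P}"
    using finite_same_card_bij[OF assms, of "{1..card P}"] by auto
  have "bij_betw (\<lambda>x. if x \<in> P then h x else 0) P {1..card P}"
    using h by (rule bij_betw_cong[THEN iffD1, rotated]) simp
  then have "(\<lambda>x. if x \<in> P then h x else 0) \<in> labelings P"
    unfolding labelings_def by simp
  then show ?thesis by blast
qed

definition relabel :: "(nat \<Rightarrow> nat) \<Rightarrow> 'a set \<Rightarrow> ('a \<Rightarrow> nat) \<Rightarrow> 'a \<Rightarrow> nat" where
  "relabel \<sigma> P L x = (if x \<in> P then \<sigma> (L x) else 0)"

lemma relabel_labelings:
  assumes "L \<in> labelings P" and "bij_betw \<sigma> {1..card P} {1..card P}"
  shows "relabel \<sigma> P L \<in> labelings P"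
proof -
  have "bij_betw (\<sigma> \<circ> L) P {1..card P}"
    using assms bij_betw_trans unfolding labelings_def by blast
  then have "bij_betw (relabel \<sigma> P L) P {1..card P}"
    by (rule bij_betw_cong[THEN iffD1, rotated]) (simp add: relabel_def)
  then show ?thesis
    unfolding labelings_def by (simp add: relabel_def)
qed

lemma relabel_relabel_inverse:
  assumes "L \<in> labelings P" and "\<And>j. j \<in> {1..card P} \<Longrightarrow> \<tau> (\<sigma> j) = j"
  shows "relabel \<tau> P (relabel \<sigma> P L) = L"
proof
  fix x
  show "relabel \<tau> P (relabel \<sigma> P L) x = L x"
    using assms(2)[OF labelings_range[OF assms(1)]] labelings_outside[OF assms(1)]
    unfolding relabel_def by simp
qed

text \<open>With \<open>k = L(r)\<close>: the root's label becomes \<open>n\<close>, label \<open>1\<close> (the chain start) takes \<open>k - 1\<close>,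
  and every other label drops by one.\<close>

definition promotion_shift :: "nat \<Rightarrow> nat \<Rightarrow> nat \<Rightarrow> nat" where
  "promotion_shift n k j = (if j = k then n else if j = 1 then k - 1 else j - 1)"

definition promotion_unshift :: "nat \<Rightarrow> nat \<Rightarrow> nat \<Rightarrow> nat" where
  "promotion_unshift n k j = (if j = n then k else if j + 1 = k then 1 else j + 1)"

lemma promotion_unshift_shift:
  "k \<in> {1..n} \<Longrightarrow> j \<in> {1..n} \<Longrightarrow> promotion_unshift n k (promotion_shift n k j) = j"
  unfolding promotion_shift_def promotion_unshift_def by auto

lemma promotion_shift_unshift:
  "k \<in> {1..n} \<Longrightarrow> j \<in> {1..n} \<Longrightarrow> promotion_shift n k (promotion_unshift n k j) = j"
  unfolding promotion_shift_def promotion_unshift_def by auto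

lemma promotion_shift_range:
  "k \<in> {1..n} \<Longrightarrow> j \<in> {1..n} \<Longrightarrow> promotion_shift n k j \<in> {1..n}"
  unfolding promotion_shift_def by auto

lemma promotion_unshift_range:
  "k \<in> {1..n} \<Longrightarrow> j \<in> {1..n} \<Longrightarrow> promotion_unshift n k j \<in> {1..n}"
  unfolding promotion_unshift_def by auto

lemma bij_betw_promotion_shift:
  assumes "k \<in> {1..n}"
  shows "bij_betw (promotion_shift n k) {1..n} {1..n}"
proof (rule bij_betw_byWitness[where f' = "promotion_unshift n k"])
  show "\<forall>j\<in>{1..n}. promotion_unshift n k (promotion_shift n k j) = j"
    using assms promotion_unshift_shift by simp
  show "\<forall>j\<in>{1..n}. promotion_shift n k (promotion_unshift n k j) = j"
    using assms promotion_shift_unshift by simp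
  show "promotion_shift n k ` {1..n} \<subseteq> {1..n}" "promotion_unshift n k ` {1..n} \<subseteq> {1..n}"
    using assms promotion_shift_range promotion_unshift_range by auto
qed

lemma bij_betw_promotion_unshift:
  assumes "k \<in> {1..n}"
  shows "bij_betw (promotion_unshift n k) {1..n} {1..n}"
proof (rule bij_betw_byWitness[where f' = "promotion_shift n k"])
  show "\<forall>j\<in>{1..n}. promotion_shift n k (promotion_unshift n k j) = j"
    using assms promotion_shift_unshift by simp
  show "\<forall>j\<in>{1..n}. promotion_unshift n k (promotion_shift n k j) = j"
    using assms promotion_unshift_shift by simp
  show "promotion_unshift n k ` {1..n} \<subseteq> {1..n}" "promotion_shift n k ` {1..n} \<subseteq> {1..n}"
    using assms promotion_shift_range promotion_unshift_range by auto
qed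

lemma labelings_chain_start:
  assumes "finite P" and "P \<noteq> {}" and L: "L \<in> labelings P"
  shows "chain_start P L \<in> P" and "L (chain_start P L) = 1"
proof -
  have "1 \<in> L ` P"
    using L assms(1,2) unfolding labelings_def bij_betw_def by (simp add: Suc_leI card_gt_0_iff)
  then have "\<exists>!x. x \<in> P \<and> L x = 1"
    using labelings_inj_on[OF L] by (metis imageE inj_onD)
  then have "chain_start P L \<in> P \<and> L (chain_start P L) = 1"
    unfolding chain_start_def by (rule theI')
  then show "chain_start P L \<in> P" and "L (chain_start P L) = 1" by simp_all
qed

context
  fixes P :: "'a set" and lt :: "'a \<Rightarrow> 'a \<Rightarrow> bool" and r :: 'a
  assumes star: "rooted_star P lt r"
begin

lemma rooted_star_finite: "finite P" and rooted_star_root: "r \<in> P"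
  using star unfolding rooted_star_def by simp_all

lemma rooted_star_is_maximal_iff: "is_maximal P lt x \<longleftrightarrow> x = r"
  using star unfolding is_maximal_def rooted_star_def by auto

lemma rooted_star_L_succ:
  assumes "x \<in> P" and "x \<noteq> r"
  shows "L_succ P lt L x = r"
proof -
  have lt_iff: "y \<in> P \<Longrightarrow> lt x y \<longleftrightarrow> y = r" for y
    using star assms unfolding rooted_star_def by auto
  have "r \<in> P \<and> lt x r"
    using lt_iff rooted_star_root by simp
  then have "L_succ P lt L x \<in> P \<and> lt x (L_succ P lt L x)"
    unfolding L_succ_def by (rule arg_min_natI)
  then show ?thesis
    using lt_iff by blast
qed

lemma rooted_star_in_chain_iff:
  assumes L: "L \<in> labelings P"
  shows "in_chain P lt L x \<longleftrightarrow> x = chain_start P L \<or> x = r"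
proof -
  define v where "v = chain_start P L"
  have "v \<in> P"
    unfolding v_def using labelings_chain_start(1)[OF rooted_star_finite _ L] rooted_star_root
    by blast
  have elt_0: "chain_elt P lt L 0 = v"
    unfolding chain_elt_def v_def by simp
  have elt_1: "chain_elt P lt L 1 = r" if "v \<noteq> r"
    unfolding chain_elt_def using rooted_star_L_succ[OF \<open>v \<in> P\<close> that] by (simp add: v_def)
  have in_chain: "in_chain P lt L x \<longleftrightarrow> (\<exists>i. chain_elt P lt L i = x \<and> (\<forall>j<i. chain_elt P lt L j \<noteq> r))"
    unfolding in_chain_def rooted_star_is_maximal_iff ..
  show ?thesis
  proof
    assume "in_chain P lt L x"
    then obtain i where i: "chain_elt P lt L i = x" "\<forall>j<i. chain_elt P lt L j \<noteq> r"
      unfolding in_chain by blast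
    consider "i = 0" | "i = 1" | "i > 1" by linarith
    then show "x = chain_start P L \<or> x = r"
    proof cases
      case 3
      then have "v \<noteq> r" using i(2) elt_0 by auto
      then show ?thesis using i(2) elt_1 3 by auto
    qed (use i elt_0 elt_1 v_def in auto)
  next
    assume "x = chain_start P L \<or> x = r"
    then have "chain_elt P lt L 0 = x \<or> (v \<noteq> r \<and> chain_elt P lt L 1 = x)"
      using elt_0 elt_1 v_def by auto
    then show "in_chain P lt L x"
      unfolding in_chain using elt_0 by (metis less_one less_nat_zero_code)
  qed
qed

lemma rooted_star_promotion:
  assumes L: "L \<in> labelings P"
  shows "promotion P lt L = relabel (promotion_shift (card P) (L r)) P L"
proof
  fix x
  define v where "v = chain_start P L"
  have v: "v \<in> P" "L v = 1"
    unfolding v_def using labelings_chain_start[OF rooted_star_finite _ L] rooted_star_root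
    by blast+
  have "L x = 1 \<longleftrightarrow> x = v" if "x \<in> P"
    using v that labelings_inj_on[OF L] by (metis inj_onD)
  moreover have "L x \<noteq> L r" if "x \<in> P" "x \<noteq> r"
    using that rooted_star_root labelings_inj_on[OF L] by (metis inj_onD)
  ultimately show "promotion P lt L x = relabel (promotion_shift (card P) (L r)) P L x"
    unfolding promotion_def relabel_def promotion_shift_def
      rooted_star_in_chain_iff[OF L, folded v_def] rooted_star_is_maximal_iff
    using rooted_star_L_succ by auto
qed

lemma rooted_star_label_root:
  assumes "L \<in> labelings P"
  shows "L r \<in> {1..card P}"
  using assms rooted_star_root by (rule labelings_range)

lemma rooted_star_promotion_labelings:
  assumes "L \<in> labelings P"
  shows "promotion P lt L \<in> labelings P"
  unfolding rooted_star_promotion[OF assms]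
  using assms bij_betw_promotion_shift[OF rooted_star_label_root[OF assms]]
  by (rule relabel_labelings)

lemma rooted_star_promotion_root:
  assumes "L \<in> labelings P"
  shows "promotion P lt L r = card P"
  unfolding rooted_star_promotion[OF assms] relabel_def promotion_shift_def
  using rooted_star_root by simp

lemma rooted_star_unshift_promotion:
  assumes "L \<in> labelings P"
  shows "relabel (promotion_unshift (card P) (L r)) P (promotion P lt L) = L"
  unfolding rooted_star_promotion[OF assms]
  using assms promotion_unshift_shift[OF rooted_star_label_root[OF assms]]
  by (rule relabel_relabel_inverse)

lemma rooted_star_promotion_unshift:
  assumes M: "M \<in> labelings P" and "M r = card P" and k: "k \<in> {1..card P}"
  shows "promotion P lt (relabel (promotion_unshift (card P) k) P M) = M"
proof -
  let ?L = "relabel (promotion_unshift (card P) k) P M"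
  have "?L \<in> labelings P"
    using M bij_betw_promotion_unshift[OF k] by (rule relabel_labelings)
  moreover have "?L r = k"
    using \<open>M r = card P\<close> rooted_star_root unfolding relabel_def promotion_unshift_def by simp
  ultimately have "promotion P lt ?L = relabel (promotion_shift (card P) k) P ?L"
    using rooted_star_promotion by simp
  also have "\<dots> = M"
    using M promotion_shift_unshift[OF k] by (rule relabel_relabel_inverse)
  finally show ?thesis .
qed

lemma rooted_star_promotion_fibre:
  assumes L: "L \<in> labelings P"
  shows "{L' \<in> labelings P. promotion P lt L' = promotion P lt L} =
    (\<lambda>k. relabel (promotion_unshift (card P) k) P (promotion P lt L)) ` {1..card P}"
    (is "?fibre = ?lift ` _")
proof
  show "?fibre \<subseteq> ?lift ` {1..card P}"
  proof
    fix L' assume L': "L' \<in> ?fibre"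
    then have "L' = ?lift (L' r)"
      using rooted_star_unshift_promotion[of L'] by simp
    moreover have "L' r \<in> {1..card P}"
      using L' rooted_star_label_root by simp
    ultimately show "L' \<in> ?lift ` {1..card P}" by (rule image_eqI)
  qed
  show "?lift ` {1..card P} \<subseteq> ?fibre"
  proof
    fix L' assume "L' \<in> ?lift ` {1..card P}"
    then obtain k where k: "k \<in> {1..card P}" and L': "L' = ?lift k" by blast
    have "L' \<in> labelings P"
      unfolding L' using rooted_star_promotion_labelings[OF L] bij_betw_promotion_unshift[OF k]
      by (rule relabel_labelings)
    moreover have "promotion P lt L' = promotion P lt L"
      unfolding L' using rooted_star_promotion_labelings[OF L] rooted_star_promotion_root[OF L] k
      by (rule rooted_star_promotion_unshift)
    ultimately show "L' \<in> ?fibre" by simp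
  qed
qed

lemma card_rooted_star_promotion_fibre:
  assumes L: "L \<in> labelings P"
  shows "card {L' \<in> labelings P. promotion P lt L' = promotion P lt L} = card P"
proof -
  have "inj_on (\<lambda>k. relabel (promotion_unshift (card P) k) P (promotion P lt L)) {1..card P}"
  proof (rule inj_onI)
    fix k k'
    assume "relabel (promotion_unshift (card P) k) P (promotion P lt L) =
      relabel (promotion_unshift (card P) k') P (promotion P lt L)"
    then have "relabel (promotion_unshift (card P) k) P (promotion P lt L) r =
      relabel (promotion_unshift (card P) k') P (promotion P lt L) r" by simp
    then show "k = k'"
      using rooted_star_promotion_root[OF L] rooted_star_root
      unfolding relabel_def promotion_unshift_def by simp
  qed
  then show ?thesis
    unfolding rooted_star_promotion_fibre[OF L] by (simp add: card_image)
qed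

end

theorem mainTheorem4:
  fixes P :: "'a set" and lt :: "'a \<Rightarrow> 'a \<Rightarrow> bool" and r :: 'a and n :: nat
  assumes "rooted_star P lt r"
    and "card P = n"
  shows "deg_noninv (promotion P lt) (labelings P) = real n"
proof (rule deg_noninv_uniform_fibres)
  have "finite P"
    using assms(1) by (rule rooted_star_finite)
  then show "finite (labelings P)" and "labelings P \<noteq> {}"
    by (simp_all add: labelings_finite labelings_nonempty)
  show "promotion P lt ` labelings P \<subseteq> labelings P"
    using rooted_star_promotion_labelings[OF assms(1)] by (simp add: image_subset_iff)
  fix M assume "M \<in> promotion P lt ` labelings P"
  then obtain L where "L \<in> labelings P" and "M = promotion P lt L" by blast
  then show "card {L' \<in> labelings P. promotion P lt L' = M} = n"
    using card_rooted_star_promotion_fibre[OF assms(1)] assms(2) by simp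
qed

end
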